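(* (1) For every $t\ge7$, $\mathfrak{e}^E_t\in\mathcal{E}(\mathcal{P}^{s+}_{3,5})$. (2) If $t\ge7$ and $f\in\mathcal{P}^{s+}_{3,5}$ satisfies $f(t,1,1)=f(0,1,1)=f(0,0,1)=0$, then $f=\lambda\mathfrak{e}^E_t$ for some $\lambda\ge0$. (3) $\mathfrak{e}^E_\infty=s_4\in\mathcal{E}(\mathcal{P}^{s+}_{3,5})$. (4) If $f\in\mathcal{P}^{s+}_{3,5}$ satisfies $f(0,1,1)=f(0,0,1)=f_a(0,0,1)=f_{ab}(0,0,1)=0$, then $f=\lambda s_4$ for some $\lambda\ge0$.
   Context: Let $a,b,c$ be variables. For nonnegative integers $m,n$ put $S_{m,n}=a^mb^n+b^mc^n+c^ma^n$, $S_n=S_{n,0}=a^n+b^n+c^n$, $T_{m,n}=S_{m,n}+S_{n,m}$, $U=abc$ (so $S_{1,1}=ab+bc+ca$). Let $\mathcal{H}^s_{3,5}$ be the real vector space of symmetric homogeneous polynomials of degree 5 in $\mathbb{R}[a,b,c]$; it has basis $s_0=S_5-US_{1,1}$, $s_1=T_{4,1}-2US_{1,1}$, $s_2=T_{3,2}-2US_{1,1}$, $s_3=US_2-US_{1,1}$, $s_4=US_{1,1}$. Let $\mathcal{P}^{s+}_{3,5}=\{f\in\mathcal{H}^s_{3,5}: f(a,b,c)\ge 0\text{ for all }a,b,c\ge0\}$. For a closed convex cone $\mathcal{P}$, an element $f\in\mathcal{P}\setminus\{0\}$ is extremal if whenever $f=g+h$ with $g,h\in\mathcal{P}$ we have $g,h\in\mathbb{R}_{\ge0}f$;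 $\mathcal{E}(\mathcal{P})$ is the set of extremal elements. Subscripts denote partial derivatives: $f_a=\partial f/\partial a$, $f_{ab}=\partial^2f/\partial a\partial b$. Family E: $\mathfrak{e}^E_t=s_1-s_2-\frac{4t^2+5t+3}{t+2}s_3+\frac{(t-1)^3}{t+2}s_4$, and $\mathfrak{e}^E_\infty=s_4$. *)

theory Defs
  imports "HOL-Analysis.Analysis"
begin

text \<open>Polynomials in a,b,c are represented by their (real) polynomial functions
  \<open>real \<Rightarrow> real \<Rightarrow> real \<Rightarrow> real\<close>; a polynomial is determined by its function.\<close>

type_synonym poly3 = "real \<Rightarrow> real \<Rightarrow> real \<Rightarrow> real"

definition Smn :: "nat \<Rightarrow> nat \<Rightarrow> poly3" where
  "Smn m n = (\<lambda>a b c. a^m * b^n + b^m * c^n + c^m * a^n)"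

definition Sn :: "nat \<Rightarrow> poly3" where
  "Sn n = Smn n 0"

definition Tmn :: "nat \<Rightarrow> nat \<Rightarrow> poly3" where
  "Tmn m n = (\<lambda>a b c. Smn m n a b c + Smn n m a b c)"

definition U :: poly3 where
  "U = (\<lambda>a b c. a * b * c)"

definition s0 :: poly3 where "s0 = (\<lambda>a b c. Sn 5 a b c - U a b c * Smn 1 1 a b c)"
definition s1 :: poly3 where "s1 = (\<lambda>a b c. Tmn 4 1 a b c - 2 * U a b c * Smn 1 1 a b c)"
definition s2 :: poly3 where "s2 = (\<lambda>a b c. Tmn 3 2 a b c - 2 * U a b c * Smn 1 1 a b c)"
definition s3 :: poly3 where "s3 = (\<lambda>a b c. U a b c * Sn 2 a b c - U a b c * Smn 1 1 a b c)"
definition s4 :: poly3 where "s4 = (\<lambda>a b c. U a b c * Smn 1 1 a b c)"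

text \<open>The space of symmetric homogeneous quintics, as the span of its basis.\<close>
definition H35 :: "poly3 set" where
  "H35 = {f. \<exists>c0 c1 c2 c3 c4 :: real. f = (\<lambda>a b c.
      c0 * s0 a b c + c1 * s1 a b c + c2 * s2 a b c + c3 * s3 a b c + c4 * s4 a b c)}"

definition P35 :: "poly3 set" where
  "P35 = {f \<in> H35. \<forall>a b c. a \<ge> 0 \<longrightarrow> b \<ge> 0 \<longrightarrow> c \<ge> 0 \<longrightarrow> f a b c \<ge> 0}"

definition extremal :: "poly3 set \<Rightarrow> poly3 set" where
  "extremal P = {f \<in> P. f \<noteq> (\<lambda>a b c. 0) \<and>
     (\<forall>g \<in> P. \<forall>h \<in> P. f = (\<lambda>a b c. g a b c + h a b c) \<longrightarrow>
        (\<exists>l\<ge>0. g = (\<lambda>a b c. l * f a b c)) \<and> (\<exists>l\<ge>0. h = (\<lambda>a b c. l * f a b c)))}"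

definition eE :: "real \<Rightarrow> poly3" where
  "eE t = (\<lambda>a b c. s1 a b c - s2 a b c - (4*t^2 + 5*t + 3) / (t + 2) * s3 a b c
                   + (t - 1)^3 / (t + 2) * s4 a b c)"

definition pd_a :: "poly3 \<Rightarrow> real \<Rightarrow> real \<Rightarrow> real \<Rightarrow> real" where
  "pd_a f a b c = deriv (\<lambda>x. f x b c) a"

definition pd_ab :: "poly3 \<Rightarrow> real \<Rightarrow> real \<Rightarrow> real \<Rightarrow> real" where
  "pd_ab f a b c = deriv (\<lambda>y. pd_a f a y c) b"

end

theory Submission
  imports Defs
begin

text \<open>In the coordinates p = a+b+c, q = ab+bc+ca, r = abc the form (t+2)\<cdot>e_t is linear in r.
  Where p^2 \<le> 4q, Schur's inequality of degree four bounds r from below, which suffices for t \<ge> 7.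
  Where p^2 > 4q and the coefficient of r is negative, the root of this linear function lies
  beyond the range where the discriminant ((a-b)(b-c)(c-a))^2 of the cubic with roots a, b, c
  is nonnegative.

  For extremality, any nonnegative g below e_t vanishes at the zeros (t,1,1), (0,1,1), (0,0,1);
  as t is an interior zero of x \<mapsto> g(x,1,1) it is a double zero, and these linear conditions
  cut the five-dimensional space down to the ray of e_t. For s4 = abc(ab+bc+ca), a form below s4
  vanishes on the boundary of the orthant and, along (x,1,1), grows at most linearly after
  division by x, which again leaves only multiples of s4.\<close>

definition eE_pqr :: "real \<Rightarrow> real \<Rightarrow> real \<Rightarrow> real \<Rightarrow> real" where
  "eE_pqr t p q r = (t+2)*p*q*(p^2 - 4*q) + r*((t+2)^2*(t+5)*q - (2*t+1)^2*p^2)"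

definition cubic_discr :: "real \<Rightarrow> real \<Rightarrow> real \<Rightarrow> real" where
  "cubic_discr p q r = p^2*q^2 - 4*q^3 + r*(18*p*q - 4*p^3) - 27*r^2"

lemma cubic_discr_pos_between:
  assumes "0 < r0" "r0 < r" "0 \<le> cubic_discr p q 0" "0 \<le> cubic_discr p q r"
  shows "0 < cubic_discr p q r0"
proof -
  have "r * cubic_discr p q r0 = (r - r0) * cubic_discr p q 0 + r0 * cubic_discr p q r + 27*r*r0*(r - r0)"
    unfolding cubic_discr_def by (simp add: algebra_simps power2_eq_square)
  moreover have "0 < 27*r*r0*(r - r0)" using assms(1,2) by simp
  ultimately have "0 < r * cubic_discr p q r0"
    using assms by (smt (verit) mult_nonneg_nonneg)
  thus ?thesis using assms(1,2) by (simp add: zero_less_mult_iff)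
qed

lemma eE_pqr_nonneg_small_p:
  fixes t p q r :: real
  assumes t: "t \<ge> 7" and p: "p \<ge> 0"
    and lower: "3*q \<le> p^2" and upper: "p^2 \<le> 4*q" and schur: "(p^2 - q)*(4*q - p^2) \<le> 6*p*r"
  shows "0 \<le> eE_pqr t p q r"
proof (cases "p = 0")
  case True
  then show ?thesis using lower upper by (simp add: eE_pqr_def)
next
  case False
  with p have p_pos: "p > 0" by simp
  define B where "B = (t+2)^2*(t+5)*q - (2*t+1)^2*p^2"
  define u where "u = 4*q - p^2"
  define w where "w = p^2 - 3*q"
  have u: "u \<ge> 0" and w: "w \<ge> 0" using upper lower by (simp_all add: u_def w_def)
  have B: "B \<ge> 0"
  proof -
    have "(2*t+1)^2*p^2 \<le> (2*t+1)^2*(4*q)" using upper by (simp add: mult_left_mono)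
    then have "B \<ge> q*(t^2*(t-7) + 8*(t+2))"
      unfolding B_def by (simp add: algebra_simps power2_eq_square)
    moreover have "q \<ge> 0" using upper by (smt (verit) zero_le_power2)
    then have "q*(t^2*(t-7) + 8*(t+2)) \<ge> 0" using t by simp
    ultimately show ?thesis by linarith
  qed
  define K where "K = B*(p^2 - q) - 6*(t+2)*p^2*q"
  have "K = 3*t^2*(t-7)*w^2 + (t^2*(5*t-23) + 10*t - 1)*u*w + 2*(t-1)^3*u^2"
  proof -
    have "p^2 = 4*w + 3*u" "q = u + w" by (simp_all add: u_def w_def)
    then show ?thesis unfolding K_def B_def by (simp add: algebra_simps power2_eq_square power3_eq_cube)
  qed
  also have "\<dots> \<ge> 0"
  proof -
    have "0 \<le> t^2*(5*t-23)" using t by simp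
    then have "0 \<le> t^2*(5*t-23) + 10*t - 1" using t by linarith
    then show ?thesis using t u w by (intro add_nonneg_nonneg mult_nonneg_nonneg) auto
  qed
  finally have K: "K \<ge> 0" .
  \<comment> \<open>Schur's inequality bounds r from below; B \<ge> 0 is the coefficient of r.\<close>
  have "6*p*eE_pqr t p q r = 6*(t+2)*p^2*q*(p^2 - 4*q) + B*(6*p*r)"
    by (simp add: eE_pqr_def B_def algebra_simps power2_eq_square)
  also have "\<dots> \<ge> 6*(t+2)*p^2*q*(p^2 - 4*q) + B*((p^2 - q)*(4*q - p^2))"
    using schur B by (simp add: mult_left_mono)
  also have "6*(t+2)*p^2*q*(p^2 - 4*q) + B*((p^2 - q)*(4*q - p^2)) = u*K"
    by (simp add: K_def u_def algebra_simps)
  finally have "0 \<le> 6*p*eE_pqr t p q r" using mult_nonneg_nonneg[OF u K] by linarith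
  then show ?thesis using p_pos by (simp add: zero_le_mult_iff)
qed

lemma eE_pqr_nonneg_large_p:
  fixes t p q r :: real
  assumes t: "t \<ge> 7" and p: "p \<ge> 0" and q: "q > 0" and r: "r \<ge> 0"
    and large: "4*q < p^2" and discr: "0 \<le> cubic_discr p q r"
  shows "0 \<le> eE_pqr t p q r"
proof -
  define A where "A = (t+2)*p*q*(p^2 - 4*q)"
  define B where "B = (t+2)^2*(t+5)*q - (2*t+1)^2*p^2"
  have eE_AB: "eE_pqr t p q r = A + r*B" by (simp add: eE_pqr_def A_def B_def)
  have "p \<noteq> 0" using large q by auto
  then have A: "A > 0" unfolding A_def using t p q large by simp
  show ?thesis
  proof (cases "B \<ge> 0")
    case True
    then show ?thesis unfolding eE_AB using A r by simp
  next
    case False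
    then have B: "B < 0" by simp
    define r0 where "r0 = -A/B"
    have r0: "r0 > 0" unfolding r0_def using A B by (simp add: divide_pos_neg)
    \<comment> \<open>At the root r0 of the linear function A + r B, the discriminant is nonpositive.\<close>
    define L where "L = (t+5)^2*q - 4*(t+2)*p^2"
    have "(t+2)^2*L = (t+5)*((t+2)^2*(t+5)*q) - 4*(t+2)^3*p^2"
      by (simp add: L_def algebra_simps power2_eq_square power3_eq_cube)
    also have "\<dots> < (t+5)*((2*t+1)^2*p^2) - 4*(t+2)^3*p^2"
      using B t unfolding B_def by simp
    also have "\<dots> = -27*(t+1)*p^2" by (simp add: algebra_simps power2_eq_square power3_eq_cube)
    also have "\<dots> \<le> 0" using t by (intro mult_nonpos_nonneg) auto
    finally have L: "L < 0" using t by (simp add: mult_less_0_iff)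
    have "B^2 * cubic_discr p q r0 = B^2*(p^2*q^2 - 4*q^3) - A*B*(18*p*q - 4*p^3) - 27*A^2"
      unfolding cubic_discr_def r0_def using B by (simp add: power2_eq_square field_simps)
    also have "\<dots> = q*(p^2 - 4*q)*(((t+2)^2*q - (2*t+1)*p^2)^2 * L)"
      unfolding A_def B_def L_def by (simp add: algebra_simps power2_eq_square power3_eq_cube)
    also have "\<dots> \<le> 0" using q large L by (intro mult_nonneg_nonpos) auto
    finally have "cubic_discr p q r0 \<le> 0" using B by (simp add: mult_le_0_iff)
    moreover have "0 \<le> cubic_discr p q 0"
      using large q by (simp add: cubic_discr_def power2_eq_square power3_eq_cube algebra_simps)
    ultimately have "\<not> r0 < r" using cubic_discr_pos_between[OF r0 _ _ discr] by fastforce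
    then have "r*B \<ge> r0*B" using B by (simp add: mult_right_mono_neg)
    then show ?thesis unfolding eE_AB r0_def using B by simp
  qed
qed

lemma schur_fourth_degree:
  fixes a b c :: real
  assumes "a \<ge> 0" "b \<ge> 0" "c \<ge> 0"
  shows "0 \<le> a^2*(a-b)*(a-c) + b^2*(b-a)*(b-c) + c^2*(c-a)*(c-b)"
proof -
  have ordered: "0 \<le> x^2*(x-y)*(x-z) + y^2*(y-x)*(y-z) + z^2*(z-x)*(z-y)"
    if "x \<ge> y" "y \<ge> z" "z \<ge> 0" for x y z :: real
  proof -
    have "y^2*(y-z) \<le> x^2*(x-z)" using that by (intro mult_mono power_mono) auto
    then have "0 \<le> (x-y)*(x^2*(x-z) - y^2*(y-z))" using that by simp
    moreover have "0 \<le> z^2*((x-z)*(y-z))" using that by simp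
    ultimately show ?thesis by (simp add: algebra_simps power2_eq_square)
  qed
  consider "a \<ge> b" "b \<ge> c" | "a \<ge> c" "c \<ge> b" | "b \<ge> a" "a \<ge> c" | "b \<ge> c" "c \<ge> a"
    | "c \<ge> a" "a \<ge> b" | "c \<ge> b" "b \<ge> a" by linarith
  then show ?thesis
    using ordered[of a b c] ordered[of a c b] ordered[of b a c] ordered[of b c a]
      ordered[of c a b] ordered[of c b a] assms
    by cases (simp_all add: algebra_simps)
qed

lemma eE_pqr_elementary_nonneg:
  fixes t a b c :: real
  assumes t: "t \<ge> 7" and a: "a \<ge> 0" and b: "b \<ge> 0" and c: "c \<ge> 0"
  shows "0 \<le> eE_pqr t (a+b+c) (a*b + b*c + c*a) (a*b*c)"
proof -
  define p where "p = a+b+c"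
  define q where "q = a*b + b*c + c*a"
  define r where "r = a*b*c"
  have p: "p \<ge> 0" and q: "q \<ge> 0" and r: "r \<ge> 0" using a b c by (simp_all add: p_def q_def r_def)
  have "p^2 - 3*q = ((a-b)^2 + (b-c)^2 + (c-a)^2)/2"
    by (simp add: p_def q_def algebra_simps power2_eq_square)
  then have lower: "3*q \<le> p^2" by (smt (verit) zero_le_power2 divide_nonneg_nonneg)
  have "6*p*r - (p^2 - q)*(4*q - p^2) = a^2*(a-b)*(a-c) + b^2*(b-a)*(b-c) + c^2*(c-a)*(c-b)"
    by (simp add: p_def q_def r_def algebra_simps power2_eq_square power3_eq_cube)
  then have schur: "(p^2 - q)*(4*q - p^2) \<le> 6*p*r" using schur_fourth_degree[OF a b c] by linarith
  have "cubic_discr p q r = ((a-b)*(b-c)*(c-a))^2"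
    by (simp add: cubic_discr_def p_def q_def r_def algebra_simps power2_eq_square power3_eq_cube)
  then have discr: "0 \<le> cubic_discr p q r" by simp
  have "0 \<le> eE_pqr t p q r"
  proof (cases "q = 0")
    case True
    then have "a*b = 0" using a b c unfolding q_def by (smt (verit) mult_nonneg_nonneg)
    then have "r = 0" by (simp add: r_def)
    with True show ?thesis by (simp add: eE_pqr_def)
  next
    case False
    then show ?thesis
      using eE_pqr_nonneg_small_p[OF t p lower _ schur] eE_pqr_nonneg_large_p[OF t p _ r _ discr] q
      by fastforce
  qed
  then show ?thesis by (simp add: p_def q_def r_def)
qed

lemmas basis_defs = s0_def s1_def s2_def s3_def s4_def Sn_def Tmn_def Smn_def U_def

lemma eE_eq_eE_pqr:
  fixes t a b c :: real
  assumes "t + 2 \<noteq> 0"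
  shows "(t+2) * eE t a b c = eE_pqr t (a+b+c) (a*b + b*c + c*a) (a*b*c)"
proof -
  have "(t+2) * eE t a b c
      = (t+2)*(s1 a b c - s2 a b c) - (4*t^2 + 5*t + 3) * s3 a b c + (t-1)^3 * s4 a b c"
    using assms by (simp add: eE_def right_diff_distrib distrib_left)
  also have "\<dots> = eE_pqr t (a+b+c) (a*b + b*c + c*a) (a*b*c)"
    by (simp add: eE_pqr_def basis_defs algebra_simps power2_eq_square power3_eq_cube eval_nat_numeral)
  finally show ?thesis .
qed

lemma eE_nonneg:
  fixes t a b c :: real
  assumes "t \<ge> 7" "a \<ge> 0" "b \<ge> 0" "c \<ge> 0"
  shows "0 \<le> eE t a b c"
proof -
  have "0 \<le> (t+2) * eE t a b c"
    using eE_eq_eE_pqr eE_pqr_elementary_nonneg assms by simp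
  then show ?thesis using assms(1) by (simp add: zero_le_mult_iff)
qed

lemma P35_nonneg: "f \<in> P35 \<Longrightarrow> 0 \<le> a \<Longrightarrow> 0 \<le> b \<Longrightarrow> 0 \<le> c \<Longrightarrow> 0 \<le> f a b c"
  by (simp add: P35_def)

lemma P35_vanishing_at_001_011:
  assumes "f \<in> P35" "f 0 0 1 = 0" "f 0 1 1 = 0"
  obtains c1 c3 c4 where "0 \<le> c1"
    and "f = (\<lambda>a b c. c1 * (s1 a b c - s2 a b c) + c3 * s3 a b c + c4 * s4 a b c)"
proof -
  obtain c0 c1 c2 c3 c4 where f: "f = (\<lambda>a b c.
      c0 * s0 a b c + c1 * s1 a b c + c2 * s2 a b c + c3 * s3 a b c + c4 * s4 a b c)"
    using assms(1) unfolding P35_def H35_def by blast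
  have "c0 = 0" using assms(2) by (simp add: f basis_defs)
  moreover have "c2 = -c1" using assms(3) \<open>c0 = 0\<close> by (simp add: f basis_defs)
  moreover have "0 \<le> f 0 1 2" using assms(1) by (rule P35_nonneg) auto
  ultimately have "0 \<le> c1" by (simp add: f basis_defs)
  moreover have "f = (\<lambda>a b c. c1 * (s1 a b c - s2 a b c) + c3 * s3 a b c + c4 * s4 a b c)"
    using \<open>c0 = 0\<close> \<open>c2 = -c1\<close> by (simp add: f algebra_simps)
  ultimately show thesis by (rule that)
qed

lemma s1_s2_s3_s4_at_x11:
  "c1 * (s1 x 1 1 - s2 x 1 1) + c3 * s3 x 1 1 + c4 * s4 x 1 1
    = x * ((x-1)^2 * (2*c1*(x+1) + c3) + c4*(2*x+1))"
  by (simp add: basis_defs algebra_simps power2_eq_square power3_eq_cube eval_nat_numeral)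

lemma P35_eq_eE_multiple:
  fixes t :: real
  assumes t: "t \<ge> 7" and f: "f \<in> P35"
    and zeros: "f t 1 1 = 0" "f 0 1 1 = 0" "f 0 0 1 = 0"
  shows "\<exists>l\<ge>0. f = (\<lambda>a b c. l * eE t a b c)"
proof -
  obtain c1 c3 c4 where c1: "0 \<le> c1"
    and f_eq: "f = (\<lambda>a b c. c1 * (s1 a b c - s2 a b c) + c3 * s3 a b c + c4 * s4 a b c)"
    using P35_vanishing_at_001_011[OF f zeros(3,2)] .
  have diag: "f x 1 1 = x * ((x-1)^2 * (2*c1*(x+1) + c3) + c4*(2*x+1))" for x
    using s1_s2_s3_s4_at_x11 by (simp add: f_eq)
  have E1: "(t-1)^2 * (2*c1*(t+1) + c3) + c4*(2*t+1) = 0"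
    using zeros(1) t by (simp add: diag)
  \<comment> \<open>t is an interior zero of the nonnegative function x \<mapsto> f x 1 1, hence a double zero.\<close>
  define D where "D = (t-1)^2 * (2*c1*(t+1) + c3) + c4*(2*t+1)
      + t*(2*(t-1)*(2*c1*(t+1) + c3) + 2*c1*(t-1)^2 + 2*c4)"
  have "((\<lambda>x. f x 1 1) has_real_derivative D) (at t)"
    unfolding diag D_def by (auto intro!: derivative_eq_intros simp: algebra_simps power2_eq_square)
  moreover have "\<forall>y. \<bar>t - y\<bar> < t \<longrightarrow> f t 1 1 \<le> f y 1 1"
    using zeros(1) P35_nonneg[OF f] by (auto simp: abs_if)
  ultimately have "D = 0" using t by (intro DERIV_local_min) auto
  then have "t*(2*(t-1)*(2*c1*(t+1) + c3) + 2*c1*(t-1)^2 + 2*c4) = 0"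
    using E1 by (simp add: D_def)
  then have "2*(t-1)*(2*c1*(t+1) + c3) + 2*c1*(t-1)^2 + 2*c4 = 0" using t by simp
  then have E2: "c4 = -(t-1)*(2*c1*(t+1) + c3) - c1*(t-1)^2" by linarith
  have "(t-1)*((t+2)*c3 + (4*t^2 + 5*t + 3)*c1) = -((t-1)^2 * (2*c1*(t+1) + c3) + c4*(2*t+1))"
    unfolding E2 by (simp add: algebra_simps power2_eq_square)
  then have "(t+2)*c3 + (4*t^2 + 5*t + 3)*c1 = 0" using E1 t by simp
  then have c3: "c3 = -((4*t^2 + 5*t + 3)/(t+2))*c1"
    using t by (simp add: field_simps add_eq_0_iff)
  have c4: "c4 = ((t-1)^3/(t+2))*c1"
    using E2 t unfolding c3 by (simp add: field_simps) (simp add: algebra_simps power2_eq_square power3_eq_cube)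
  have "f = (\<lambda>a b c. c1 * eE t a b c)"
    unfolding f_eq eE_def c3 c4 by (intro ext) (simp add: algebra_simps)
  with c1 show ?thesis by blast
qed

lemma extremal_if_dominated_multiple:
  assumes nonneg: "\<And>g a b c. g \<in> P \<Longrightarrow> 0 \<le> a \<Longrightarrow> 0 \<le> b \<Longrightarrow> 0 \<le> c \<Longrightarrow> 0 \<le> g a b c"
    and f: "f \<in> P" "f \<noteq> (\<lambda>a b c. 0)"
    and dominated: "\<And>g. g \<in> P \<Longrightarrow>
      (\<And>a b c. 0 \<le> a \<Longrightarrow> 0 \<le> b \<Longrightarrow> 0 \<le> c \<Longrightarrow> g a b c \<le> f a b c) \<Longrightarrow>
      \<exists>l\<ge>0. g = (\<lambda>a b c. l * f a b c)"
  shows "f \<in> extremal P"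
proof -
  have "(\<exists>l\<ge>0. g = (\<lambda>a b c. l * f a b c)) \<and> (\<exists>l\<ge>0. h = (\<lambda>a b c. l * f a b c))"
    if "g \<in> P" "h \<in> P" "f = (\<lambda>a b c. g a b c + h a b c)" for g h
  proof -
    have "f a b c = g a b c + h a b c" for a b c using that(3) by simp
    then show ?thesis
      using dominated[OF that(1)] dominated[OF that(2)] nonneg[OF that(1)] nonneg[OF that(2)]
      by (smt (verit))
  qed
  with f show ?thesis by (auto simp: extremal_def)
qed

lemma eE_in_P35: "t \<ge> 7 \<Longrightarrow> eE t \<in> P35"
  unfolding P35_def H35_def
proof (intro CollectI conjI exI allI impI)
  show "eE t = (\<lambda>a b c. 0 * s0 a b c + 1 * s1 a b c + (-1) * s2 a b c
      + (-((4*t^2 + 5*t + 3) / (t + 2))) * s3 a b c + ((t - 1)^3 / (t + 2)) * s4 a b c)"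
    by (simp add: eE_def)
qed (rule eE_nonneg)

lemma eE_zeros:
  assumes "t + 2 \<noteq> 0"
  shows "eE t t 1 1 = 0" "eE t 0 1 1 = 0" "eE t 0 0 1 = 0"
proof -
  have "(t+2) * eE t t 1 1 = eE_pqr t (t+1+1) (t*1 + 1*1 + 1*t) (t*1*1)"
    by (rule eE_eq_eE_pqr[OF assms])
  also have "\<dots> = 0" by (simp add: eE_pqr_def algebra_simps power2_eq_square)
  finally have "(t+2) * eE t t 1 1 = 0" .
  then show "eE t t 1 1 = 0" using assms by simp
qed (simp_all add: eE_def basis_defs)

lemma eE_extremal: "t \<ge> 7 \<Longrightarrow> eE t \<in> extremal P35"
proof (rule extremal_if_dominated_multiple[where P = P35])
  show "0 \<le> g a b c" if "g \<in> P35" "0 \<le> a" "0 \<le> b" "0 \<le> c" for g a b c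
    using that by (rule P35_nonneg)
  assume t: "t \<ge> 7"
  then show "eE t \<in> P35" by (rule eE_in_P35)
  have "eE t 0 1 2 = 6" by (simp add: eE_def basis_defs)
  then show "eE t \<noteq> (\<lambda>a b c. 0)" by auto
  fix g assume g: "g \<in> P35"
    and le: "\<And>a b c. 0 \<le> a \<Longrightarrow> 0 \<le> b \<Longrightarrow> 0 \<le> c \<Longrightarrow> g a b c \<le> eE t a b c"
  have vanish: "g a b c = 0" if "0 \<le> a" "0 \<le> b" "0 \<le> c" "eE t a b c = 0" for a b c
    using le[OF that(1-3)] P35_nonneg[OF g that(1-3)] that(4) by linarith
  have "t + 2 \<noteq> 0" using t by simp
  with t have "g t 1 1 = 0" "g 0 1 1 = 0" "g 0 0 1 = 0" by (simp_all add: vanish eE_zeros)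
  then show "\<exists>l\<ge>0. g = (\<lambda>a b c. l * eE t a b c)" using P35_eq_eE_multiple[OF t g] by blast
qed

lemma quadratic_le_linear_imp_nonpos:
  fixes a b c :: real
  assumes "\<And>x. 0 \<le> x \<Longrightarrow> c * x^2 \<le> a * x + b"
  shows "c \<le> 0"
proof (rule ccontr)
  assume "\<not> c \<le> 0"
  define x where "x = (\<bar>a\<bar> + \<bar>b\<bar>)/c + 1"
  have x: "x \<ge> 1" and cx: "c * x = \<bar>a\<bar> + \<bar>b\<bar> + c"
    using \<open>\<not> c \<le> 0\<close> by (simp_all add: x_def field_simps)
  have "(\<bar>a\<bar> + \<bar>b\<bar>) * x < (\<bar>a\<bar> + \<bar>b\<bar>) * x + c * x"
    using \<open>\<not> c \<le> 0\<close> x by simp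
  also have "\<dots> = (c * x) * x" by (simp only: cx distrib_right)
  also have "\<dots> = c * x^2" by (simp add: power2_eq_square)
  finally have "(\<bar>a\<bar> + \<bar>b\<bar>) * x < c * x^2" .
  moreover have "a * x \<le> \<bar>a\<bar> * x" using x by (intro mult_right_mono) auto
  moreover have "b \<le> \<bar>b\<bar> * x" using x by (smt (verit) abs_ge_self mult_le_cancel_left1)
  ultimately show False using assms[of x] x distrib_right[of "\<bar>a\<bar>" "\<bar>b\<bar>" x] by linarith
qed

lemma s4_extremal: "s4 \<in> extremal P35"
proof (rule extremal_if_dominated_multiple[where P = P35])
  show "0 \<le> g a b c" if "g \<in> P35" "0 \<le> a" "0 \<le> b" "0 \<le> c" for g a b c
    using that by (rule P35_nonneg)
  show "s4 \<in> P35" unfolding P35_def H35_def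
  proof (intro CollectI conjI exI allI impI)
    show "s4 = (\<lambda>a b c. 0 * s0 a b c + 0 * s1 a b c + 0 * s2 a b c + 0 * s3 a b c + 1 * s4 a b c)"
      by simp
  qed (simp add: basis_defs)
  show "s4 \<noteq> (\<lambda>a b c. 0)" by (auto simp: basis_defs fun_eq_iff intro!: exI[of _ 1])
  fix g assume g: "g \<in> P35"
    and le: "\<And>a b c. 0 \<le> a \<Longrightarrow> 0 \<le> b \<Longrightarrow> 0 \<le> c \<Longrightarrow> g a b c \<le> s4 a b c"
  have squeeze: "g a b c = 0" if "0 \<le> a" "0 \<le> b" "0 \<le> c" "a*b*c = 0" for a b c
    using le[OF that(1-3)] P35_nonneg[OF g that(1-3)] that(4) by (simp add: basis_defs)
  obtain c1 c3 c4 where c1: "0 \<le> c1"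
    and g_eq: "g = (\<lambda>a b c. c1 * (s1 a b c - s2 a b c) + c3 * s3 a b c + c4 * s4 a b c)"
    using P35_vanishing_at_001_011[OF g] squeeze by auto
  have "g 0 1 2 = 6*c1" by (simp add: g_eq basis_defs)
  then have "c1 = 0" using squeeze[of 0 1 2] c1 by simp
  have bounds: "0 \<le> (x-1)^2 * c3 + c4*(2*x+1)" "(x-1)^2 * c3 + c4*(2*x+1) \<le> 2*x+1" if "x > 0" for x
  proof -
    have "g x 1 1 = x * ((x-1)^2 * c3 + c4*(2*x+1))" "s4 x 1 1 = x * (2*x + 1)"
      using s1_s2_s3_s4_at_x11[of c1 x c3 c4] \<open>c1 = 0\<close> by (simp_all add: g_eq basis_defs algebra_simps)
    then show "0 \<le> (x-1)^2 * c3 + c4*(2*x+1)" "(x-1)^2 * c3 + c4*(2*x+1) \<le> 2*x+1"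
      using P35_nonneg[OF g, of x 1 1] le[of x 1 1] that
      by (simp_all add: zero_le_mult_iff mult_le_cancel_left_pos)
  qed
  have c4: "0 \<le> c4" "c4 \<le> 1" using bounds[of 1] by simp_all
  have "c3 * y^2 \<le> 2*y + 3" "-c3 * y^2 \<le> 2*y + 3" if "0 \<le> y" for y
  proof -
    have "0 \<le> c4*(2*y+3)" "c4*(2*y+3) \<le> 2*y+3" using c4 that by (simp_all add: mult_left_le_one_le)
    then show "c3 * y^2 \<le> 2*y + 3" "-c3 * y^2 \<le> 2*y + 3"
      using bounds[of "y+1"] that by (simp_all add: algebra_simps)
  qed
  then have "c3 \<le> 0" "-c3 \<le> 0"
    using quadratic_le_linear_imp_nonpos[of c3 2 3] quadratic_le_linear_imp_nonpos[of "-c3" 2 3] by auto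
  then have "c3 = 0" by simp
  have "g = (\<lambda>a b c. c4 * s4 a b c)" by (simp add: g_eq \<open>c1 = 0\<close> \<open>c3 = 0\<close>)
  with c4 show "\<exists>l\<ge>0. g = (\<lambda>a b c. l * s4 a b c)" by blast
qed

lemma P35_eq_s4_multiple:
  assumes f: "f \<in> P35" and zeros: "f 0 1 1 = 0" "f 0 0 1 = 0"
    and derivs: "pd_a f 0 0 1 = 0" "pd_ab f 0 0 1 = 0"
  shows "\<exists>l\<ge>0. f = (\<lambda>a b c. l * s4 a b c)"
proof -
  obtain c1 c3 c4 where f_eq: "f = (\<lambda>a b c. c1 * (s1 a b c - s2 a b c) + c3 * s3 a b c + c4 * s4 a b c)"
    using P35_vanishing_at_001_011[OF f zeros(2,1)] by blast
  define P where "P y = c1*(1 + y^4) + c3*(y^3 - y^2 + y) + c4*y^2" for y :: real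
  have pd_a: "pd_a f 0 y 1 = P y" for y
  proof -
    have "((\<lambda>x. f x y 1) has_real_derivative P y) (at 0)"
      unfolding f_eq basis_defs P_def
      by (auto intro!: derivative_eq_intros simp: algebra_simps power2_eq_square eval_nat_numeral)
    then show ?thesis unfolding pd_a_def by (rule DERIV_imp_deriv)
  qed
  have "c1 = 0" using derivs(1) by (simp add: pd_a P_def)
  have "(P has_real_derivative c3) (at 0)"
    unfolding P_def[abs_def] by (rule derivative_eq_intros refl | simp)+
  then have "pd_ab f 0 0 1 = c3" unfolding pd_ab_def pd_a by (rule DERIV_imp_deriv)
  then have "c3 = 0" using derivs(2) by simp
  have "0 \<le> f 1 1 1" using f by (rule P35_nonneg) auto
  then have "0 \<le> c4" by (simp add: f_eq \<open>c1 = 0\<close> \<open>c3 = 0\<close> basis_defs)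
  moreover have "f = (\<lambda>a b c. c4 * s4 a b c)" by (simp add: f_eq \<open>c1 = 0\<close> \<open>c3 = 0\<close>)
  ultimately show ?thesis by blast
qed

theorem theorem4p5:
  shows "(\<forall>t::real. t \<ge> 7 \<longrightarrow> eE t \<in> extremal P35)
    \<and> (\<forall>(t::real) f. t \<ge> 7 \<longrightarrow> f \<in> P35 \<longrightarrow> f t 1 1 = 0 \<longrightarrow> f 0 1 1 = 0 \<longrightarrow> f 0 0 1 = 0
          \<longrightarrow> (\<exists>l::real\<ge>0. f = (\<lambda>a b c. l * eE t a b c)))
    \<and> s4 \<in> extremal P35
    \<and> (\<forall>f. f \<in> P35 \<longrightarrow> f 0 1 1 = 0 \<longrightarrow> f 0 0 1 = 0 \<longrightarrow> pd_a f 0 0 1 = 0 \<longrightarrow> pd_ab f 0 0 1 = 0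
          \<longrightarrow> (\<exists>l::real\<ge>0. f = (\<lambda>a b c. l * s4 a b c)))"
  using eE_extremal P35_eq_eE_multiple s4_extremal P35_eq_s4_multiple by blast

end
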